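(* Let $\alpha,\beta$ be positive integers and let $h$ be a real-valued function differentiable on an open neighbourhood of $\mathcal{U}_2$ in $\mathbb{C}^{2\times2}$, with $h(\Psi D)=h(\Psi)$ for all $\Psi\in\mathcal{U}_2$ and diagonal unitary $D$, such that $h(\Psi(\theta,\phi))=z_{\alpha,\beta}(\theta,\phi)^TMz_{\alpha,\beta}(\theta,\phi)+C$ for all $\theta,\phi\in\mathbb{R}$, for some real symmetric $M\in\mathbb{R}^{3\times3}$ and $C\in\mathbb{R}$. Let $\lambda_1\ge\lambda_2\ge\lambda_3$ be the eigenvalues of $M$, and assume $\frac{\lambda_2-\lambda_3}{\lambda_1-\lambda_3}\le1-\varepsilon$ for some $\varepsilon>0$. Let $w$ be a unit eigenvector of $M$ for $\lambda_1$ with $w_1\ge0$, let $\theta_*\in[0,\pi/(2\alpha)]$, $\phi_*\in\mathbb{R}$ satisfy $z_{\alpha,\beta}(\theta_*,\phi_* )=w$, and $\Psi_*=\Psi(\theta_*,\phi_* )$. Then $$h(\Psi_* )-h(I_2)\ge\frac{\varepsilon}{4\alpha}\,\|\operatorname{grad}h(I_2)\|\,\|\Psi_*-I_2\|.$$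
   Context: $\mathcal{U}_2$ is the group of $2\times2$ unitary matrices; $\|\cdot\|$ the Frobenius norm; $\mathbb{C}^{2\times2}$ carries the real inner product $\mathrm{Re}\,\mathrm{tr}(X^HY)$; $\nabla h=\partial h/\partial X^{\Re}+\mathrm{i}\,\partial h/\partial X^{\Im}$ and $\operatorname{grad}h(U)=U\,\mathrm{skew}(U^H\nabla h(U))$ with $\mathrm{skew}(P)=\frac12(P-P^H)$. $\Psi(\theta,\phi)=\begin{bmatrix}\cos\theta&-\sin\theta e^{\mathrm{i}\phi}\\ \sin\theta e^{-\mathrm{i}\phi}&\cos\theta\end{bmatrix}$ and $z_{\alpha,\beta}(\theta,\phi)=(\cos\alpha\theta,-\sin\alpha\theta\cos\beta\phi,-\sin\alpha\theta\sin\beta\phi)^T$. *)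

theory Defs
  imports "HOL-Analysis.Analysis"
begin

type_synonym cmat2 = "complex^2^2"

definition adjoint2 :: "cmat2 \<Rightarrow> cmat2" where
  "adjoint2 A = (\<chi> i j. cnj (A $ j $ i))"

definition unitary2 :: "cmat2 set" where
  "unitary2 = {U. adjoint2 U ** U = mat 1}"

definition diag_unitary2 :: "cmat2 set" where
  "diag_unitary2 = {D. D \<in> unitary2 \<and> (\<forall>i j. i \<noteq> j \<longrightarrow> D $ i $ j = 0)}"

definition skew2 :: "cmat2 \<Rightarrow> cmat2" where
  "skew2 P = (1/2 :: real) *\<^sub>R (P - adjoint2 P)"

definition matE :: "2 \<Rightarrow> 2 \<Rightarrow> complex \<Rightarrow> cmat2" where
  "matE i j c = (\<chi> k l. if k = i \<and> l = j then c else 0)"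

definition egrad :: "(cmat2 \<Rightarrow> real) \<Rightarrow> cmat2 \<Rightarrow> cmat2" where
  "egrad h U = (\<chi> i j. Complex (frechet_derivative h (at U) (matE i j 1))
                                (frechet_derivative h (at U) (matE i j \<i>)))"

definition rgrad :: "(cmat2 \<Rightarrow> real) \<Rightarrow> cmat2 \<Rightarrow> cmat2" where
  "rgrad h U = U ** skew2 (adjoint2 U ** egrad h U)"

definition Psi :: "real \<Rightarrow> real \<Rightarrow> cmat2" where
  "Psi \<theta> \<phi> = (\<chi> i j.
     if i = 1 \<and> j = 1 then complex_of_real (cos \<theta>)
     else if i = 1 \<and> j = 2 then - complex_of_real (sin \<theta>) * cis \<phi>
     else if i = 2 \<and> j = 1 then complex_of_real (sin \<theta>) * cis (- \<phi>)
     else complex_of_real (cos \<theta>))"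

definition zab :: "nat \<Rightarrow> nat \<Rightarrow> real \<Rightarrow> real \<Rightarrow> real^3" where
  "zab \<alpha> \<beta> \<theta> \<phi> = (\<chi> k.
     if k = 1 then cos (real \<alpha> * \<theta>)
     else if k = 2 then - sin (real \<alpha> * \<theta>) * cos (real \<beta> * \<phi>)
     else - sin (real \<alpha> * \<theta>) * sin (real \<beta> * \<phi>))"

end

theory Submission
  imports Defs
begin

(* Along the curve t \<mapsto> Psi t \<phi> through I, h is the quadratic form of M at z(t, \<phi>)
   plus C, so the derivative of h at I in the direction Psi_tangent \<phi> is
   -2 \<alpha> (M12 cos \<beta>\<phi> + M13 sin \<beta>\<phi>). Invariance under diagonal unitaries kills
   the derivative in the imaginary diagonal directions, which leaves
   |grad h(I)| \<le> 2 \<alpha> |(M12, M13)|. On the other side h(Psi \<theta>s \<phi>s) - h(I) = l1 - M11,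
   and |Psi \<theta>s \<phi>s - I| \<le> 2 sqrt (1 - w1) since \<theta>s \<le> \<alpha> \<theta>s \<le> pi/2.
   Writing M in an orthonormal basis starting with w, the complementary 2x2 block
   has eigenvalues l2, l3, so its diagonal entry lies between them; the gap
   condition then yields \<epsilon> |(M12, M13)|^2 (1 - w1) \<le> (l1 - M11)^2. *)

lemma gap_ratio_le:
  fixes l1 l2 l3 \<epsilon> :: real
  assumes "l3 \<le> l2" "l2 \<le> l1" "(l2 - l3) / (l1 - l3) \<le> 1 - \<epsilon>"
  shows "l2 - l3 \<le> (1 - \<epsilon>) * (l1 - l3)" and "\<epsilon> \<le> 1"
proof -
  show "\<epsilon> \<le> 1"
    using assms divide_nonneg_nonneg[of "l2 - l3" "l1 - l3"] by linarith
  show "l2 - l3 \<le> (1 - \<epsilon>) * (l1 - l3)"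
  \<comment> \<open>for \<open>l1 = l3\<close> the ratio is the junk value \<open>0 / 0 = 0\<close>, and \<open>l2 = l3\<close> as well\<close>
  proof (cases "l1 = l3")
    case False
    with assms show ?thesis by (simp add: divide_le_eq)
  qed (use assms in simp)
qed

lemma sym2_diag_entry_between_eigenvalues:
  fixes a b d l2 l3 :: real
  assumes "\<And>t. (a - t) * (d - t) - b\<^sup>2 = (l2 - t) * (l3 - t)" and "l3 \<le> l2"
  shows "b\<^sup>2 = (l2 - a) * (a - l3)" and "l3 \<le> a" and "a \<le> l2"
proof -
  show b2: "b\<^sup>2 = (l2 - a) * (a - l3)"
    using assms(1)[of a] by (simp add: algebra_simps)
  then have "0 \<le> (l2 - a) * (a - l3)" by (metis zero_le_power2)
  with assms(2) show "l3 \<le> a" "a \<le> l2"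
    by (smt (verit) mult_neg_pos mult_pos_neg)+
qed

lemma monic_quadratic_cancel_linear_factor:
  fixes l a b d l2 l3 :: real
  assumes "\<And>t. (l - t) * ((a - t) * (d - t) - b\<^sup>2) = (l - t) * ((l2 - t) * (l3 - t))"
  shows "(a - t) * (d - t) - b\<^sup>2 = (l2 - t) * (l3 - t)"
proof -
  have agree: "(a - t) * (d - t) - b\<^sup>2 = (l2 - t) * (l3 - t)" if "t \<noteq> l" for t
    using assms[of t] that by simp
  have "a + d = l2 + l3"
    using agree[of "l + 1"] agree[of "l + 2"] by (simp add: algebra_simps)
  moreover have "(a - (l + 1)) * (d - (l + 1)) - b\<^sup>2 = (l2 - (l + 1)) * (l3 - (l + 1))"
    by (rule agree) simp
  ultimately show ?thesis by algebra
qed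

lemma spectral_gap_scalar_bound:
  fixes l1 l2 l3 \<mu> \<nu> c \<epsilon> :: real
  assumes \<nu>: "\<nu>\<^sup>2 = (l2 - \<mu>) * (\<mu> - l3)" and "l3 \<le> \<mu>" "\<mu> \<le> l2" "l2 \<le> l1"
    and "0 \<le> \<epsilon>" and gap: "l2 - l3 \<le> (1 - \<epsilon>) * (l1 - l3)" and "c\<^sup>2 \<le> 1"
  shows "\<epsilon> * (c\<^sup>2 * (l1 - \<mu>)\<^sup>2 + \<nu>\<^sup>2) \<le> (l1 - \<mu>)\<^sup>2"
proof -
  define d where "d = l1 - \<mu>"
  have "0 \<le> d" using assms unfolding d_def by simp
  have "\<epsilon> * (\<mu> - l3) \<le> (1 - \<epsilon>) * d"
    using gap \<open>\<mu> \<le> l2\<close> unfolding d_def by (simp add: algebra_simps)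
  have "\<epsilon> * \<nu>\<^sup>2 \<le> \<epsilon> * (d * (\<mu> - l3))"
    unfolding \<nu> d_def using assms by (intro mult_left_mono mult_right_mono) auto
  also have "\<dots> = d * (\<epsilon> * (\<mu> - l3))" by simp
  also have "\<dots> \<le> d * ((1 - \<epsilon>) * d)"
    using \<open>0 \<le> d\<close> \<open>\<epsilon> * (\<mu> - l3) \<le> (1 - \<epsilon>) * d\<close> by (simp add: mult_left_mono)
  finally have "\<epsilon> * \<nu>\<^sup>2 \<le> (1 - \<epsilon>) * d\<^sup>2" by (simp add: power2_eq_square mult_ac)
  moreover have "\<epsilon> * (c\<^sup>2 * d\<^sup>2) \<le> \<epsilon> * d\<^sup>2"
    using assms by (intro mult_left_mono mult_left_le_one_le) auto
  ultimately show ?thesis unfolding d_def[symmetric] by (simp add: algebra_simps)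
qed

lemma le_of_scaled_power2_le:
  fixes \<epsilon> x y :: real
  assumes "0 \<le> \<epsilon>" "\<epsilon> \<le> 1" "0 \<le> y" and le: "\<epsilon> * x\<^sup>2 \<le> y\<^sup>2"
  shows "\<epsilon> * x \<le> y"
proof (rule power2_le_imp_le)
  have "(\<epsilon> * x)\<^sup>2 = \<epsilon> * (\<epsilon> * x\<^sup>2)" by (simp add: power2_eq_square)
  also have "\<dots> \<le> \<epsilon> * x\<^sup>2" using assms(1,2) by (simp add: mult_left_le_one_le)
  finally show "(\<epsilon> * x)\<^sup>2 \<le> y\<^sup>2" using le by linarith
qed (rule assms(3))

lemma symmetric3_eigvec_block_form:
  fixes M :: "real^3^3" and w :: "real^3" and l1 c s a b :: real
  assumes sym: "transpose M = M" and eig: "M *v w = l1 *\<^sub>R w"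
    and w: "w $ 1 = c" "w $ 2 = - s * a" "w $ 3 = - s * b"
    and cs: "c\<^sup>2 + s\<^sup>2 = 1" and ab: "a\<^sup>2 + b\<^sup>2 = 1"
  obtains \<mu> \<nu> \<mu>' where "M$1$1 = c\<^sup>2 * l1 + s\<^sup>2 * \<mu>"
    and "(M$1$2)\<^sup>2 + (M$1$3)\<^sup>2 = s\<^sup>2 * (c\<^sup>2 * (l1 - \<mu>)\<^sup>2 + \<nu>\<^sup>2)"
    and "\<And>t. det (M - t *\<^sub>R mat 1) = (l1 - t) * ((\<mu> - t) * (\<mu>' - t) - \<nu>\<^sup>2)"
proof
  have "M$j$i = M$i$j" for i j
    using arg_cong[OF sym, of "\<lambda>X. X$i$j"] by (simp add: transpose_def)
  then have M_sym: "M$2$1 = M$1$2" "M$3$1 = M$1$3" "M$3$2 = M$2$3" by auto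
  have eig_rows: "(M *v w) $ i = l1 * w $ i" for i
    using eig by simp
  have e1: "M$1$1 * c - M$1$2 * s * a - M$1$3 * s * b = l1 * c"
    and e2: "M$1$2 * c - M$2$2 * s * a - M$2$3 * s * b = - l1 * s * a"
    and e3: "M$1$3 * c - M$2$3 * s * a - M$3$3 * s * b = - l1 * s * b"
    using eig_rows[of 1] eig_rows[of 2] eig_rows[of 3]
    by (simp_all add: matrix_vector_mult_def sum_3 w M_sym algebra_simps)
  \<comment> \<open>\<open>(w, v, v')\<close> is an orthonormal basis, in which \<open>M\<close> is block diagonal with blocks
      \<open>l1\<close> and \<open>[[\<mu>, \<nu>], [\<nu>, \<mu>']]\<close>.\<close>
  define v v' :: "real^3" where "v = vector [s, c * a, c * b]" and "v' = vector [0, - b, a]"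
  define \<mu> \<nu> \<mu>' where "\<mu> = v \<bullet> (M *v v)" and "\<nu> = v' \<bullet> (M *v v)" and "\<mu>' = v' \<bullet> (M *v v')"
  have \<mu>_eq: "\<mu> = s * (M$1$1 * s + M$1$2 * (c * a) + M$1$3 * (c * b))
      + c * a * (M$1$2 * s + M$2$2 * (c * a) + M$2$3 * (c * b))
      + c * b * (M$1$3 * s + M$2$3 * (c * a) + M$3$3 * (c * b))"
    and \<nu>_eq: "\<nu> = - b * (M$1$2 * s + M$2$2 * (c * a) + M$2$3 * (c * b))
      + a * (M$1$3 * s + M$2$3 * (c * a) + M$3$3 * (c * b))"
    and \<mu>'_eq: "\<mu>' = - b * (M$2$2 * - b + M$2$3 * a) + a * (M$2$3 * - b + M$3$3 * a)"
    unfolding \<mu>_def \<nu>_def \<mu>'_def v_def v'_def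
    by (simp_all add: inner_vec_def matrix_vector_mult_def sum_3 M_sym)
  show "M$1$1 = c\<^sup>2 * l1 + s\<^sup>2 * \<mu>"
    unfolding \<mu>_eq using e1 e2 e3 cs ab by algebra
  show "(M$1$2)\<^sup>2 + (M$1$3)\<^sup>2 = s\<^sup>2 * (c\<^sup>2 * (l1 - \<mu>)\<^sup>2 + \<nu>\<^sup>2)"
    unfolding \<mu>_eq \<nu>_eq using e1 e2 e3 cs ab by algebra
  fix t
  have "det (M - t *\<^sub>R mat 1) = (M$1$1-t) * (M$2$2-t) * (M$3$3-t) + 2 * M$1$2 * M$2$3 * M$1$3
      - (M$1$1-t) * (M$2$3)\<^sup>2 - (M$1$2)\<^sup>2 * (M$3$3-t) - (M$1$3)\<^sup>2 * (M$2$2-t)"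
    unfolding det_3 by (simp add: mat_def M_sym power2_eq_square algebra_simps)
  also have "\<dots> = (l1 - t) * ((\<mu> - t) * (\<mu>' - t) - \<nu>\<^sup>2)"
    unfolding \<mu>_eq \<nu>_eq \<mu>'_eq using e1 e2 e3 cs ab by algebra
  finally show "det (M - t *\<^sub>R mat 1) = (l1 - t) * ((\<mu> - t) * (\<mu>' - t) - \<nu>\<^sup>2)" .
qed

lemma symmetric_eigvec_first_entry_gap:
  fixes M :: "real^3^3" and w :: "real^3" and l1 l2 l3 \<epsilon> c s a b :: real
  assumes sym: "transpose M = M"
    and char: "\<And>t. det (M - t *\<^sub>R mat 1) = (l1 - t) * (l2 - t) * (l3 - t)"
    and "l3 \<le> l2" "l2 \<le> l1" "0 \<le> \<epsilon>" and gap: "l2 - l3 \<le> (1 - \<epsilon>) * (l1 - l3)"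
    and eig: "M *v w = l1 *\<^sub>R w"
    and w: "w $ 1 = c" "w $ 2 = - s * a" "w $ 3 = - s * b"
    and cs: "c\<^sup>2 + s\<^sup>2 = 1" and ab: "a\<^sup>2 + b\<^sup>2 = 1" and "0 \<le> c"
  shows "0 \<le> l1 - M$1$1" and "\<epsilon> * ((M$1$2)\<^sup>2 + (M$1$3)\<^sup>2) * (1 - c) \<le> (l1 - M$1$1)\<^sup>2"
proof -
  obtain \<mu> \<nu> \<mu>' where M11: "M$1$1 = c\<^sup>2 * l1 + s\<^sup>2 * \<mu>"
    and M1_offdiag: "(M$1$2)\<^sup>2 + (M$1$3)\<^sup>2 = s\<^sup>2 * (c\<^sup>2 * (l1 - \<mu>)\<^sup>2 + \<nu>\<^sup>2)"
    and block: "\<And>t. det (M - t *\<^sub>R mat 1) = (l1 - t) * ((\<mu> - t) * (\<mu>' - t) - \<nu>\<^sup>2)"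
    using symmetric3_eigvec_block_form[OF sym eig w cs ab] by blast
  have "(\<mu> - t) * (\<mu>' - t) - \<nu>\<^sup>2 = (l2 - t) * (l3 - t)" for t
    by (rule monic_quadratic_cancel_linear_factor[where l = l1]) (metis block char mult.assoc)
  note block_eigen = sym2_diag_entry_between_eigenvalues[OF this \<open>l3 \<le> l2\<close>]
  have "c\<^sup>2 \<le> 1" using cs by (metis le_add_same_cancel1 zero_le_power2)
  then have "c \<le> 1" by (simp add: abs_square_le_1)
  have M11_gap: "l1 - M$1$1 = s\<^sup>2 * (l1 - \<mu>)"
    using M11 cs by algebra
  show "0 \<le> l1 - M$1$1"
    unfolding M11_gap using block_eigen \<open>l2 \<le> l1\<close> by simp
  have "\<epsilon> * ((M$1$2)\<^sup>2 + (M$1$3)\<^sup>2) * (1 - c) = s\<^sup>2 * (1 - c) * (\<epsilon> * (c\<^sup>2 * (l1 - \<mu>)\<^sup>2 + \<nu>\<^sup>2))"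
    unfolding M1_offdiag by (simp add: algebra_simps)
  also have "\<dots> \<le> s\<^sup>2 * (1 - c) * (l1 - \<mu>)\<^sup>2"
    using spectral_gap_scalar_bound[OF block_eigen \<open>l2 \<le> l1\<close> \<open>0 \<le> \<epsilon>\<close> gap \<open>c\<^sup>2 \<le> 1\<close>] \<open>c \<le> 1\<close>
    by (intro mult_left_mono) auto
  also have "\<dots> \<le> (1 + c) * (s\<^sup>2 * (1 - c) * (l1 - \<mu>)\<^sup>2)"
    using mult_nonneg_nonneg[OF \<open>0 \<le> c\<close>, of "s\<^sup>2 * (1 - c) * (l1 - \<mu>)\<^sup>2"] \<open>c \<le> 1\<close>
    by (simp add: distrib_right)
  also have "\<dots> = (l1 - M$1$1)\<^sup>2"
    unfolding M11_gap using cs by algebra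
  finally show "\<epsilon> * ((M$1$2)\<^sup>2 + (M$1$3)\<^sup>2) * (1 - c) \<le> (l1 - M$1$1)\<^sup>2" .
qed

lemma zab_eigvec_first_entry_gap:
  fixes M :: "real^3^3" and l1 l2 l3 \<epsilon> :: real
  assumes sym: "transpose M = M"
    and char: "\<And>t. det (M - t *\<^sub>R mat 1) = (l1 - t) * (l2 - t) * (l3 - t)"
    and "l3 \<le> l2" "l2 \<le> l1" "0 < \<epsilon>" "(l2 - l3) / (l1 - l3) \<le> 1 - \<epsilon>"
    and eig: "M *v zab \<alpha> \<beta> \<theta> \<phi> = l1 *\<^sub>R zab \<alpha> \<beta> \<theta> \<phi>" and "0 \<le> cos (real \<alpha> * \<theta>)"
  shows "\<epsilon> * (sqrt ((M$1$2)\<^sup>2 + (M$1$3)\<^sup>2) * sqrt (1 - cos (real \<alpha> * \<theta>))) \<le> l1 - M$1$1"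
proof (rule le_of_scaled_power2_le)
  note gap = gap_ratio_le[OF \<open>l3 \<le> l2\<close> \<open>l2 \<le> l1\<close> \<open>(l2 - l3) / (l1 - l3) \<le> 1 - \<epsilon>\<close>]
  note entry_gap = symmetric_eigvec_first_entry_gap[OF sym char \<open>l3 \<le> l2\<close> \<open>l2 \<le> l1\<close> _ gap(1) eig,
      of "cos (real \<alpha> * \<theta>)" "sin (real \<alpha> * \<theta>)" "cos (real \<beta> * \<phi>)" "sin (real \<beta> * \<phi>)"]
  show "0 \<le> l1 - M$1$1"
    using entry_gap assms by (simp add: zab_def)
  show "\<epsilon> * (sqrt ((M$1$2)\<^sup>2 + (M$1$3)\<^sup>2) * sqrt (1 - cos (real \<alpha> * \<theta>)))\<^sup>2 \<le> (l1 - M$1$1)\<^sup>2"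
    using entry_gap assms by (simp add: zab_def power_mult_distrib)
  show "0 \<le> \<epsilon>" "\<epsilon> \<le> 1" using gap(2) assms by simp_all
qed

definition Psi_tangent :: "real \<Rightarrow> cmat2" where
  "Psi_tangent \<phi> =
     (\<chi> i j. if i = 1 \<and> j = 2 then - cis \<phi> else if i = 2 \<and> j = 1 then cis (- \<phi>) else 0)"

lemma Psi_eq_cos_sin: "Psi t \<phi> = cos t *\<^sub>R mat 1 + sin t *\<^sub>R Psi_tangent \<phi>"
  unfolding Psi_def Psi_tangent_def
  by (simp add: vec_eq_iff forall_2 mat_def complex_eq_iff)

lemma Psi_0 [simp]: "Psi 0 \<phi> = mat 1"
  by (simp add: Psi_eq_cos_sin)

lemma Psi_has_vector_derivative_0: "((\<lambda>t. Psi t \<phi>) has_vector_derivative Psi_tangent \<phi>) (at 0)"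
proof -
  have "((\<lambda>t. cos t *\<^sub>R mat 1 + sin t *\<^sub>R Psi_tangent \<phi>) has_vector_derivative
      (- sin 0 *\<^sub>R mat 1 + cos 0 *\<^sub>R Psi_tangent \<phi>)) (at 0)"
    by (intro derivative_eq_intros) auto
  then show ?thesis by (simp add: Psi_eq_cos_sin)
qed

lemma norm_cmat2_power2:
  "(norm (X::cmat2))\<^sup>2 = (cmod (X$1$1))\<^sup>2 + (cmod (X$1$2))\<^sup>2 + (cmod (X$2$1))\<^sup>2 + (cmod (X$2$2))\<^sup>2"
  by (simp add: norm_vec_def L2_set_def sum_2)

lemma norm_Psi_minus_mat1_power2: "(norm (Psi t \<phi> - mat 1))\<^sup>2 = 4 - 4 * cos t"
  unfolding norm_cmat2_power2
  by (simp add: Psi_def mat_def norm_mult cmod_power2) (use sin_cos_squared_add3[of t] in algebra)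

lemma norm_Psi_minus_mat1_le:
  assumes "0 < \<alpha>" and "0 \<le> \<theta>" and "\<theta> \<le> pi / (2 * real \<alpha>)"
  shows "norm (Psi \<theta> \<phi> - mat 1) \<le> 2 * sqrt (1 - cos (real \<alpha> * \<theta>))"
proof -
  have "real \<alpha> * \<theta> \<le> pi / 2" using assms by (simp add: field_simps)
  moreover have "\<theta> \<le> real \<alpha> * \<theta>" using assms by (simp add: mult_le_cancel_right1)
  ultimately have "cos (real \<alpha> * \<theta>) \<le> cos \<theta>"
    using assms by (intro cos_monotone_0_pi_le) auto
  then have "(norm (Psi \<theta> \<phi> - mat 1))\<^sup>2 \<le> (2 * sqrt (1 - cos (real \<alpha> * \<theta>)))\<^sup>2"
    unfolding norm_Psi_minus_mat1_power2 by (simp add: power_mult_distrib)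
  then show ?thesis by (rule power2_le_imp_le) simp
qed

definition diag_phase :: "2 \<Rightarrow> real \<Rightarrow> cmat2" where
  "diag_phase k t = (\<chi> i j. if i = j then (if i = k then cis t else 1) else 0)"

lemma mat1_unitary2: "mat 1 \<in> unitary2"
  by (simp add: unitary2_def adjoint2_def vec_eq_iff forall_2 mat_def matrix_matrix_mult_def sum_2)

lemma diag_phase_diag_unitary2: "diag_phase k t \<in> diag_unitary2"
proof -
  have "adjoint2 (diag_phase k t) ** diag_phase k t = mat 1"
    using exhaust_2[of k]
    by (auto simp: adjoint2_def diag_phase_def matrix_matrix_mult_def sum_2 vec_eq_iff forall_2
        mat_def cis_cnj cis_mult)
  then show ?thesis unfolding diag_unitary2_def unitary2_def by (auto simp: diag_phase_def)
qed

lemma diag_phase_eq_cos_sin: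
  "diag_phase k t = mat 1 + (cos t - 1) *\<^sub>R matE k k 1 + sin t *\<^sub>R matE k k \<i>"
  using exhaust_2[of k]
  by (auto simp: diag_phase_def matE_def vec_eq_iff forall_2 mat_def complex_eq_iff)

lemma diag_phase_has_vector_derivative_0: "(diag_phase k has_vector_derivative matE k k \<i>) (at 0)"
proof -
  have "((\<lambda>t. mat 1 + (cos t - 1) *\<^sub>R matE k k 1 + sin t *\<^sub>R matE k k \<i>) has_vector_derivative
      (- sin 0 *\<^sub>R matE k k 1 + cos 0 *\<^sub>R matE k k \<i>)) (at 0)"
    by (intro derivative_eq_intros) auto
  then show ?thesis by (simp add: diag_phase_eq_cos_sin[abs_def])
qed

lemma has_derivative_along_curve:
  fixes h :: "'a::real_normed_vector \<Rightarrow> real"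
  assumes "(h has_derivative D) (at (\<gamma> 0))" and "(\<gamma> has_vector_derivative v) (at 0)"
    and "((\<lambda>t. h (\<gamma> t)) has_real_derivative d) (at 0)"
  shows "D v = d"
proof -
  have "((\<lambda>t. h (\<gamma> t)) has_derivative (\<lambda>x. D (x *\<^sub>R v))) (at 0)"
    using diff_chain_at[OF assms(2)[unfolded has_vector_derivative_def] assms(1)]
    by (simp add: comp_def)
  with assms(3) have "(\<lambda>x. d * x) = (\<lambda>x. D (x *\<^sub>R v))"
    unfolding has_field_derivative_def by (rule has_derivative_unique)
  then show ?thesis by (metis mult.right_neutral scaleR_one)
qed

lemma diag_invariant_derivative_vanishes:
  fixes h :: "cmat2 \<Rightarrow> real"
  assumes hD: "(h has_derivative D) (at (mat 1))"
    and inv: "\<And>E. E \<in> diag_unitary2 \<Longrightarrow> h E = h (mat 1)"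
  shows "D (matE k k \<i>) = 0"
proof -
  have "(h has_derivative D) (at (diag_phase k 0))"
    using hD by (simp add: diag_phase_eq_cos_sin)
  moreover have "h (diag_phase k t) = h (mat 1)" for t
    using inv[OF diag_phase_diag_unitary2] .
  then have "((\<lambda>t. h (diag_phase k t)) has_real_derivative 0) (at 0)"
    by simp
  ultimately show ?thesis
    by (rule has_derivative_along_curve[OF _ diag_phase_has_vector_derivative_0])
qed

lemma adjoint2_mat1 [simp]: "adjoint2 (mat 1) = mat 1"
  by (simp add: adjoint2_def vec_eq_iff mat_def)

lemma norm_rgrad_mat1_power2:
  fixes h :: "cmat2 \<Rightarrow> real"
  assumes hD: "(h has_derivative D) (at (mat 1))"
    and "D (matE 1 1 \<i>) = 0" and "D (matE 2 2 \<i>) = 0"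
  shows "(norm (rgrad h (mat 1)))\<^sup>2 = ((D (Psi_tangent 0))\<^sup>2 + (D (Psi_tangent (- pi/2)))\<^sup>2) / 2"
proof -
  have fd: "frechet_derivative h (at (mat 1)) = D"
    using hD by (rule frechet_derivative_at[symmetric])
  have lin: "linear D" using hD by (rule has_derivative_linear)
  define a b where "a i j = D (matE i j 1)" and "b i j = D (matE i j \<i>)" for i j
  have G: "rgrad h (mat 1) $ i $ j = Complex ((a i j - a j i)/2) ((b i j + b j i)/2)" for i j
    unfolding rgrad_def adjoint2_mat1 matrix_mul_lid skew2_def egrad_def fd a_def b_def
    by (simp add: adjoint2_def complex_eq_iff)
  have "Psi_tangent 0 = matE 2 1 1 - matE 1 2 1"
    by (simp add: Psi_tangent_def matE_def vec_eq_iff forall_2)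
  then have d0: "D (Psi_tangent 0) = a 2 1 - a 1 2"
    unfolding a_def using lin by (simp add: linear_diff)
  have "Psi_tangent (- pi/2) = matE 1 2 \<i> + matE 2 1 \<i>"
    by (simp add: Psi_tangent_def matE_def vec_eq_iff forall_2 cis.ctr complex_eq_iff)
  then have d1: "D (Psi_tangent (- pi/2)) = b 1 2 + b 2 1"
    unfolding b_def using lin by (simp add: linear_add)
  show ?thesis
    unfolding norm_cmat2_power2 G cmod_power2 d0 d1 using assms(2,3) unfolding b_def[symmetric]
    by (simp add: power2_eq_square algebra_simps)
qed

lemma norm_rgrad_mat1_le:
  fixes h :: "cmat2 \<Rightarrow> real"
  assumes hD: "(h has_derivative D) (at (mat 1))"
    and inv: "\<And>E. E \<in> diag_unitary2 \<Longrightarrow> h E = h (mat 1)"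
    and bound: "\<And>\<phi>. \<bar>D (Psi_tangent \<phi>)\<bar> \<le> B"
  shows "norm (rgrad h (mat 1)) \<le> B"
proof (rule power2_le_imp_le)
  have vanish: "D (matE k k \<i>) = 0" for k
    using hD inv by (rule diag_invariant_derivative_vanishes)
  have sq: "(D (Psi_tangent \<phi>))\<^sup>2 \<le> B\<^sup>2" for \<phi>
    using bound[of \<phi>] by (metis abs_le_square_iff abs_of_nonneg abs_ge_zero order_trans)
  show "(norm (rgrad h (mat 1)))\<^sup>2 \<le> B\<^sup>2"
    unfolding norm_rgrad_mat1_power2[OF hD vanish vanish]
    using sq[of 0] sq[of "- pi/2"] by (simp add: field_simps)
  show "0 \<le> B" using bound[of 0] by linarith
qed

lemma zab_quadratic_form_has_derivative_0:
  fixes M :: "real^3^3"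
  assumes "transpose M = M"
  shows "((\<lambda>t. zab \<alpha> \<beta> t \<phi> \<bullet> (M *v zab \<alpha> \<beta> t \<phi>)) has_real_derivative
           - 2 * real \<alpha> * (M$1$2 * cos (real \<beta> * \<phi>) + M$1$3 * sin (real \<beta> * \<phi>))) (at 0)"
proof -
  have "M$j$i = M$i$j" for i j
    using arg_cong[OF assms, of "\<lambda>X. X$i$j"] by (simp add: transpose_def)
  then have M_sym: "M$2$1 = M$1$2" "M$3$1 = M$1$3" "M$3$2 = M$2$3" by auto
  define a b where "a = cos (real \<beta> * \<phi>)" and "b = sin (real \<beta> * \<phi>)"
  have expand: "zab \<alpha> \<beta> t \<phi> \<bullet> (M *v zab \<alpha> \<beta> t \<phi>) =
      M$1$1 * cos (real \<alpha> * t)^2 - 2 * M$1$2 * cos (real \<alpha> * t) * sin (real \<alpha> * t) * a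
      - 2 * M$1$3 * cos (real \<alpha> * t) * sin (real \<alpha> * t) * b + M$2$2 * sin (real \<alpha> * t)^2 * a^2
      + 2 * M$2$3 * sin (real \<alpha> * t)^2 * a * b + M$3$3 * sin (real \<alpha> * t)^2 * b^2" for t :: real
    by (simp add: inner_vec_def matrix_vector_mult_def zab_def sum_3 M_sym a_def b_def
        algebra_simps power2_eq_square)
  show ?thesis
    unfolding expand a_def[symmetric] b_def[symmetric]
    by (auto intro!: derivative_eq_intros simp: algebra_simps)
qed

lemma abs_cos_sin_combination_le: "\<bar>a * cos x + b * sin x\<bar> \<le> sqrt (a\<^sup>2 + b\<^sup>2)"
proof (rule real_le_rsqrt)
  have "(a * cos x + b * sin x)\<^sup>2 + (a * sin x - b * cos x)\<^sup>2 = a\<^sup>2 + b\<^sup>2"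
    using sin_cos_squared_add[of x] by algebra
  then show "\<bar>a * cos x + b * sin x\<bar>\<^sup>2 \<le> a\<^sup>2 + b\<^sup>2"
    by (metis power2_abs le_add_same_cancel1 zero_le_power2)
qed

lemma norm_rgrad_mat1_le_quadratic_on_Psi:
  fixes h :: "cmat2 \<Rightarrow> real" and M :: "real^3^3"
  assumes hD: "(h has_derivative D) (at (mat 1))"
    and inv: "\<And>E. E \<in> diag_unitary2 \<Longrightarrow> h E = h (mat 1)"
    and sym: "transpose M = M"
    and on_Psi: "\<And>\<theta> \<phi>. h (Psi \<theta> \<phi>) = zab \<alpha> \<beta> \<theta> \<phi> \<bullet> (M *v zab \<alpha> \<beta> \<theta> \<phi>) + C"
  shows "norm (rgrad h (mat 1)) \<le> 2 * real \<alpha> * sqrt ((M$1$2)\<^sup>2 + (M$1$3)\<^sup>2)"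
proof (rule norm_rgrad_mat1_le[OF hD inv])
  fix \<phi>
  have dir: "D (Psi_tangent \<phi>)
      = - 2 * real \<alpha> * (M$1$2 * cos (real \<beta> * \<phi>) + M$1$3 * sin (real \<beta> * \<phi>))"
    using hD[folded Psi_0[of \<phi>]] Psi_has_vector_derivative_0
    by (rule has_derivative_along_curve)
      (auto simp: on_Psi intro!: derivative_eq_intros zab_quadratic_form_has_derivative_0 sym)
  show "\<bar>D (Psi_tangent \<phi>)\<bar> \<le> 2 * real \<alpha> * sqrt ((M$1$2)\<^sup>2 + (M$1$3)\<^sup>2)"
    unfolding dir abs_mult using abs_cos_sin_combination_le by (simp add: mult_left_mono)
qed

lemma zab_0_quadratic_form: "zab \<alpha> \<beta> 0 \<phi> \<bullet> (M *v zab \<alpha> \<beta> 0 \<phi>) = M$1$1"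
  by (simp add: zab_def inner_vec_def matrix_vector_mult_def sum_3)

theorem lemma4p4:
  fixes \<alpha> \<beta> :: nat and h :: "cmat2 \<Rightarrow> real" and M :: "real^3^3" and C :: real
    and l1 l2 l3 \<epsilon> :: real and w :: "real^3" and \<theta>s \<phi>s :: real
  assumes "\<alpha> > 0" and "\<beta> > 0"
    and "\<exists>S. open S \<and> unitary2 \<subseteq> S \<and> (\<forall>X\<in>S. h differentiable (at X))"
    and "\<And>P D. P \<in> unitary2 \<Longrightarrow> D \<in> diag_unitary2 \<Longrightarrow> h (P ** D) = h P"
    and "transpose M = M"
    and "\<And>\<theta> \<phi>. h (Psi \<theta> \<phi>) = zab \<alpha> \<beta> \<theta> \<phi> \<bullet> (M *v zab \<alpha> \<beta> \<theta> \<phi>) + C"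
    and "\<And>t. det (M - t *\<^sub>R mat 1) = (l1 - t) * (l2 - t) * (l3 - t)"
    and "l1 \<ge> l2" and "l2 \<ge> l3"
    and "\<epsilon> > 0" and "(l2 - l3) / (l1 - l3) \<le> 1 - \<epsilon>"
    and "M *v w = l1 *\<^sub>R w" and "norm w = 1" and "w $ 1 \<ge> 0"
    and "0 \<le> \<theta>s" and "\<theta>s \<le> pi / (2 * real \<alpha>)"
    and "zab \<alpha> \<beta> \<theta>s \<phi>s = w"
  shows "h (Psi \<theta>s \<phi>s) - h (mat 1)
           \<ge> \<epsilon> / (4 * real \<alpha>) * norm (rgrad h (mat 1)) * norm (Psi \<theta>s \<phi>s - mat 1)"
proof -
  obtain D where hD: "(h has_derivative D) (at (mat 1))"
    using assms(3) mat1_unitary2 unfolding differentiable_def by blast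
  define r c where "r = sqrt ((M$1$2)\<^sup>2 + (M$1$3)\<^sup>2)" and "c = cos (real \<alpha> * \<theta>s)"
  have grad: "norm (rgrad h (mat 1)) \<le> 2 * real \<alpha> * r"
    unfolding r_def using hD _ assms(5,6)
    by (rule norm_rgrad_mat1_le_quadratic_on_Psi) (use assms(4)[OF mat1_unitary2] in simp)
  have dist: "norm (Psi \<theta>s \<phi>s - mat 1) \<le> 2 * sqrt (1 - c)"
    unfolding c_def using assms(1,15,16) by (rule norm_Psi_minus_mat1_le)
  have "0 \<le> c" using assms(14) unfolding assms(17)[symmetric] by (simp add: c_def zab_def)
  then have entry_gap: "\<epsilon> * (r * sqrt (1 - c)) \<le> l1 - M$1$1"
    unfolding r_def c_def using zab_eigvec_first_entry_gap assms(5,7-12,17) by blast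
  have gain: "h (Psi \<theta>s \<phi>s) - h (mat 1) = l1 - M$1$1"
    using assms(6)[of \<theta>s \<phi>s] assms(6)[of 0 0] zab_0_quadratic_form assms(12,13,17)
    by (simp add: inner_commute dot_square_norm)
  have "\<epsilon> / (4 * real \<alpha>) * norm (rgrad h (mat 1)) * norm (Psi \<theta>s \<phi>s - mat 1)
      \<le> \<epsilon> / (4 * real \<alpha>) * (2 * real \<alpha> * r) * (2 * sqrt (1 - c))"
    using grad dist assms(10) by (intro mult_mono mult_left_mono) (auto simp: r_def)
  also have "\<dots> = \<epsilon> * (r * sqrt (1 - c))"
    using assms(1) by (simp add: field_simps)
  finally show ?thesis
    using entry_gap gain by linarith
qed

end
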